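(* There exist a constant $c>0$ and infinitely many values of $n$ such that for each such $n$ there is a tabletop rearrangement instance with $n$ uniform cylinders (congruent disc footprints) whose unlabeled $\mathrm{MRB}$ is at least $c\sqrt{n}$, and whose labeled $\mathrm{MRB}$ (for any assignment of labels to the start and goal poses) is at least $c\sqrt{n}$. That is, for both the labeled and unlabeled problems with $n$ uniform cylinders, $\mathrm{MRB}$ is lower bounded by $\Omega(\sqrt{n})$ in the worst case.
   Context: A tabletop rearrangement instance consists of $n$ objects in a bounded planar workspace, with a feasible start arrangement and a feasible goal arrangement (poses in $SE(2)$; feasible means no two placed footprints have intersecting interiors). In the labeled setting each object $o_i$ must end at its own goal pose $x_i^g$; in the unlabeled setting the (congruent) objects are interchangeable and must end occupying all goal poses. A plan with external buffers: each object is picked from its start pose exactly once and either placed at a goal pose (its own goal in the labeled case, any unoccupied goal in the unlabeled case) or into an external buffer outside the workspace (unlimited capacity), in the latter case later moved from the buffer to such a goal pose; an object may be placed at a goal pose only if it overlaps no object currently in the workspace; at the end the goal requirement holds. Running buffers at a moment = number of objects stored in buffers; $\mathrm{MRB}$ = minimum over plans of the maximum number of running buffers. *)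

theory Defs
  imports "HOL-Analysis.Analysis"
begin

text \<open>Objects are indexed by 0..<n; start pose of object i is
  the disc centred at s i, goal poses are the discs centred at g k (k < n).
  (Rotations are irrelevant for disc footprints.)\<close>

type_synonym pt = "real ^ 2"

definition footprint :: "real \<Rightarrow> pt \<Rightarrow> pt set" where
  "footprint r x = cball x r"

definition overlap :: "real \<Rightarrow> pt \<Rightarrow> pt \<Rightarrow> bool" where
  "overlap r x y \<longleftrightarrow> interior (footprint r x) \<inter> interior (footprint r y) \<noteq> {}"

definition feasible :: "real \<Rightarrow> nat \<Rightarrow> (nat \<Rightarrow> pt) \<Rightarrow> bool" where
  "feasible r n p \<longleftrightarrow> (\<forall>i<n. \<forall>j<n. i \<noteq> j \<longrightarrow> \<not> overlap r (p i) (p j))"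

datatype loc = AtStart | InBuffer | AtGoal nat

datatype action = StartToGoal nat nat | StartToBuffer nat | BufferToGoal nat nat

fun apply_act :: "action \<Rightarrow> (nat \<Rightarrow> loc) \<Rightarrow> (nat \<Rightarrow> loc)" where
  "apply_act (StartToGoal i k) c = c(i := AtGoal k)"
| "apply_act (StartToBuffer i) c = c(i := InBuffer)"
| "apply_act (BufferToGoal i k) c = c(i := AtGoal k)"

definition can_place :: "bool \<Rightarrow> real \<Rightarrow> nat \<Rightarrow> (nat \<Rightarrow> pt) \<Rightarrow> (nat \<Rightarrow> pt)
    \<Rightarrow> (nat \<Rightarrow> loc) \<Rightarrow> nat \<Rightarrow> nat \<Rightarrow> bool" where
  "can_place lab r n s g c i k \<longleftrightarrow>
     k < n \<and> (lab \<longrightarrow> k = i) \<and>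
     (\<forall>j<n. c j \<noteq> AtGoal k) \<and>
     (\<forall>j<n. j \<noteq> i \<longrightarrow>
        (c j = AtStart \<longrightarrow> \<not> overlap r (g k) (s j)) \<and>
        (\<forall>k'. c j = AtGoal k' \<longrightarrow> \<not> overlap r (g k) (g k')))"

fun act_ok :: "bool \<Rightarrow> real \<Rightarrow> nat \<Rightarrow> (nat \<Rightarrow> pt) \<Rightarrow> (nat \<Rightarrow> pt)
    \<Rightarrow> (nat \<Rightarrow> loc) \<Rightarrow> action \<Rightarrow> bool" where
  "act_ok lab r n s g c (StartToGoal i k) \<longleftrightarrow>
     i < n \<and> c i = AtStart \<and> can_place lab r n s g c i k"
| "act_ok lab r n s g c (StartToBuffer i) \<longleftrightarrow> i < n \<and> c i = AtStart"
| "act_ok lab r n s g c (BufferToGoal i k) \<longleftrightarrow>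
     i < n \<and> c i = InBuffer \<and> can_place lab r n s g c i k"

definition goal_reached :: "nat \<Rightarrow> (nat \<Rightarrow> loc) \<Rightarrow> bool" where
  "goal_reached n c \<longleftrightarrow> (\<forall>i<n. \<exists>k. c i = AtGoal k) \<and> (\<forall>k<n. \<exists>i<n. c i = AtGoal k)"

fun valid_from :: "bool \<Rightarrow> real \<Rightarrow> nat \<Rightarrow> (nat \<Rightarrow> pt) \<Rightarrow> (nat \<Rightarrow> pt)
    \<Rightarrow> (nat \<Rightarrow> loc) \<Rightarrow> action list \<Rightarrow> bool" where
  "valid_from lab r n s g c [] = goal_reached n c"
| "valid_from lab r n s g c (a # as) =
     (act_ok lab r n s g c a \<and> valid_from lab r n s g (apply_act a c) as)"

definition nbuf :: "nat \<Rightarrow> (nat \<Rightarrow> loc) \<Rightarrow> nat" where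
  "nbuf n c = card {i. i < n \<and> c i = InBuffer}"

fun maxbuf :: "nat \<Rightarrow> (nat \<Rightarrow> loc) \<Rightarrow> action list \<Rightarrow> nat" where
  "maxbuf n c [] = nbuf n c"
| "maxbuf n c (a # as) = max (nbuf n c) (maxbuf n (apply_act a c) as)"

definition init_cfg :: "nat \<Rightarrow> loc" where
  "init_cfg = (\<lambda>_. AtStart)"

text \<open>MRB: minimum over valid plans of the maximum number of running buffers
  (lab = True: labeled, object i must go to goal g i; lab = False: unlabeled).\<close>
definition MRB :: "bool \<Rightarrow> real \<Rightarrow> nat \<Rightarrow> (nat \<Rightarrow> pt) \<Rightarrow> (nat \<Rightarrow> pt) \<Rightarrow> nat" where
  "MRB lab r n s g = Inf {maxbuf n init_cfg p | p. valid_from lab r n s g init_cfg p}"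

end

theory Submission
  imports Defs
begin

(* While a plan fills the goals, every object whose start pose overlaps an occupied goal
   must already have left its start, so it is either at a goal or in the buffer.  Goals
   get occupied one at a time, so some configuration has exactly h occupied goals K, and
   then the buffer holds at least |N(K)| - h objects, where N(K) is the set of starts
   overlapping K.  Hence MRB >= e whenever every h-set of goals overlaps at least h + e
   starts; this does not depend on the labelling of the goals.

   For n = 2 m^2 put the starts on the even and the goals on the odd cells of a
   2m x 2m checkerboard, with a radius for which two discs overlap exactly when their
   cells are adjacent.  Group the cells into m x m blocks of 2 x 2.  A block meeting K
   contributes both of its starts to N(K), and a block not contained in K that meets K
   or touches a block contained in K contributes one start more than |K \<inter> block|.
   If |K| = m^2, a row/column argument finds m/2 such blocks, so
   MRB >= m/2 >= sqrt n / 8. *)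

section \<open>Running buffers forced by expansion of the overlap relation\<close>

definition placed_objects :: "nat \<Rightarrow> (nat \<Rightarrow> loc) \<Rightarrow> nat set" where
  "placed_objects n c = {i. i < n \<and> (\<exists>k. c i = AtGoal k)}"

definition occupied_goals :: "nat \<Rightarrow> (nat \<Rightarrow> loc) \<Rightarrow> nat set" where
  "occupied_goals n c = {k. k < n \<and> (\<exists>i<n. c i = AtGoal k)}"

definition overlapping_starts :: "real \<Rightarrow> nat \<Rightarrow> (nat \<Rightarrow> pt) \<Rightarrow> (nat \<Rightarrow> pt) \<Rightarrow> nat set \<Rightarrow> nat set" where
  "overlapping_starts r n s g K = {j. j < n \<and> (\<exists>k\<in>K. overlap r (g k) (s j))}"

definition sound_cfg :: "real \<Rightarrow> nat \<Rightarrow> (nat \<Rightarrow> pt) \<Rightarrow> (nat \<Rightarrow> pt) \<Rightarrow> (nat \<Rightarrow> loc) \<Rightarrow> bool" where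
  "sound_cfg r n s g c \<longleftrightarrow>
     card (placed_objects n c) = card (occupied_goals n c) \<and>
     (\<forall>j\<in>overlapping_starts r n s g (occupied_goals n c). c j \<noteq> AtStart)"

lemma finite_placed_objects [simp]: "finite (placed_objects n c)"
  unfolding placed_objects_def by simp

lemma finite_occupied_goals [simp]: "finite (occupied_goals n c)"
  unfolding occupied_goals_def by simp

lemma sound_cfg_init: "sound_cfg r n s g init_cfg"
  by (simp add: sound_cfg_def init_cfg_def placed_objects_def occupied_goals_def
      overlapping_starts_def)

lemma
  assumes "\<forall>k. c i \<noteq> AtGoal k"
  shows placed_objects_upd_buffer: "placed_objects n (c(i := InBuffer)) = placed_objects n c"
    and occupied_goals_upd_buffer: "occupied_goals n (c(i := InBuffer)) = occupied_goals n c"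
    and placed_objects_upd_goal:
      "i < n \<Longrightarrow> placed_objects n (c(i := AtGoal k)) = insert i (placed_objects n c)"
    and occupied_goals_upd_goal:
      "i < n \<Longrightarrow> k < n \<Longrightarrow> occupied_goals n (c(i := AtGoal k)) = insert k (occupied_goals n c)"
  using assms unfolding placed_objects_def occupied_goals_def by auto

lemma sound_cfg_upd_buffer:
  assumes "sound_cfg r n s g c" and "c i = AtStart"
  shows "sound_cfg r n s g (c(i := InBuffer))"
  using assms unfolding sound_cfg_def
  by (simp add: placed_objects_upd_buffer occupied_goals_upd_buffer)

lemma sound_cfg_upd_goal:
  assumes sound: "sound_cfg r n s g c" and "i < n" and not_placed: "\<forall>k'. c i \<noteq> AtGoal k'"
    and placeable: "can_place lab r n s g c i k"
  shows "sound_cfg r n s g (c(i := AtGoal k))"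
proof -
  have "k < n" and free: "\<forall>j<n. c j \<noteq> AtGoal k"
    and clear: "\<forall>j<n. j \<noteq> i \<longrightarrow> c j = AtStart \<longrightarrow> \<not> overlap r (g k) (s j)"
    using placeable unfolding can_place_def by auto
  have "i \<notin> placed_objects n c" using not_placed unfolding placed_objects_def by simp
  moreover have "k \<notin> occupied_goals n c" using free unfolding occupied_goals_def by simp
  ultimately have
    "card (placed_objects n (c(i := AtGoal k))) = card (occupied_goals n (c(i := AtGoal k)))"
    using sound \<open>i < n\<close> \<open>k < n\<close> not_placed unfolding sound_cfg_def
    by (simp add: placed_objects_upd_goal occupied_goals_upd_goal)
  moreover have "(c(i := AtGoal k)) j \<noteq> AtStart"
    if "j \<in> overlapping_starts r n s g (insert k (occupied_goals n c))" for j
    using that sound clear unfolding sound_cfg_def overlapping_starts_def by auto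
  ultimately show ?thesis
    unfolding sound_cfg_def using \<open>i < n\<close> \<open>k < n\<close> not_placed
    by (simp add: occupied_goals_upd_goal)
qed

lemma sound_cfg_apply_act:
  assumes "sound_cfg r n s g c" and "act_ok lab r n s g c a"
  shows "sound_cfg r n s g (apply_act a c)"
  using assms
  by (cases a) (auto intro: sound_cfg_upd_buffer sound_cfg_upd_goal[where lab = lab])

lemma card_occupied_goals_apply_act:
  "card (occupied_goals n (apply_act a c)) \<le> Suc (card (occupied_goals n c))"
proof -
  have "occupied_goals n (c(i := l)) \<subseteq> insert k (occupied_goals n c)"
    if "l = InBuffer \<or> l = AtGoal k" for i l k
    using that unfolding occupied_goals_def by auto
  then obtain k where "occupied_goals n (apply_act a c) \<subseteq> insert k (occupied_goals n c)"
    by (cases a) (simp_all, blast+)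
  then have "card (occupied_goals n (apply_act a c)) \<le> card (insert k (occupied_goals n c))"
    by (simp add: card_mono)
  also have "\<dots> \<le> Suc (card (occupied_goals n c))"
    by (simp add: card_insert_le_m1)
  finally show ?thesis .
qed

lemma card_overlapping_starts_occupied_le:
  assumes "sound_cfg r n s g c"
  shows "card (overlapping_starts r n s g (occupied_goals n c))
    \<le> nbuf n c + card (occupied_goals n c)"
proof -
  have "c j = InBuffer \<or> (\<exists>k. c j = AtGoal k)" if "c j \<noteq> AtStart" for j
    using that by (cases "c j") auto
  then have "overlapping_starts r n s g (occupied_goals n c)
      \<subseteq> {i. i < n \<and> c i = InBuffer} \<union> placed_objects n c"
    using assms unfolding sound_cfg_def overlapping_starts_def placed_objects_def by blast
  then have "card (overlapping_starts r n s g (occupied_goals n c))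
      \<le> card ({i. i < n \<and> c i = InBuffer} \<union> placed_objects n c)"
    by (simp add: card_mono)
  also have "\<dots> \<le> nbuf n c + card (placed_objects n c)"
    unfolding nbuf_def by (rule card_Un_le)
  finally show ?thesis using assms unfolding sound_cfg_def by simp
qed

definition goal_expansion :: "real \<Rightarrow> nat \<Rightarrow> (nat \<Rightarrow> pt) \<Rightarrow> (nat \<Rightarrow> pt) \<Rightarrow> nat \<Rightarrow> nat \<Rightarrow> bool" where
  "goal_expansion r n s g h e \<longleftrightarrow>
     (\<forall>K\<subseteq>{..<n}. card K = h \<longrightarrow> h + e \<le> card (overlapping_starts r n s g K))"

lemma nbuf_ge_of_goal_expansion:
  assumes "goal_expansion r n s g h e" and "sound_cfg r n s g c" and "card (occupied_goals n c) = h"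
  shows "e \<le> nbuf n c"
proof -
  have "occupied_goals n c \<subseteq> {..<n}" unfolding occupied_goals_def by auto
  then have "h + e \<le> card (overlapping_starts r n s g (occupied_goals n c))"
    using assms(1,3) unfolding goal_expansion_def by blast
  then show ?thesis using card_overlapping_starts_occupied_le[OF assms(2)] assms(3) by linarith
qed

lemma nbuf_le_maxbuf: "nbuf n c \<le> maxbuf n c p"
  by (cases p) simp_all

lemma occupied_goals_goal_reached: "goal_reached n c \<Longrightarrow> occupied_goals n c = {..<n}"
  unfolding goal_reached_def occupied_goals_def by auto

lemma maxbuf_ge_of_goal_expansion:
  assumes expansion: "goal_expansion r n s g h e" and "h \<le> n"
  shows "sound_cfg r n s g c \<Longrightarrow> valid_from lab r n s g c p \<Longrightarrow> card (occupied_goals n c) \<le> h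
    \<Longrightarrow> e \<le> maxbuf n c p"
proof (induction p arbitrary: c)
  case Nil
  then have "card (occupied_goals n c) = h"
    using occupied_goals_goal_reached \<open>h \<le> n\<close> by simp
  then show ?case using nbuf_ge_of_goal_expansion[OF expansion Nil(1)] by simp
next
  case (Cons a p)
  show ?case
  proof (cases "card (occupied_goals n c) = h")
    case True
    then show ?thesis
      using nbuf_ge_of_goal_expansion[OF expansion Cons.prems(1)] nbuf_le_maxbuf order_trans
      by blast
  next
    case False
    then have "card (occupied_goals n (apply_act a c)) \<le> h"
      using card_occupied_goals_apply_act[of n a c] Cons.prems(3) by simp
    then have "e \<le> maxbuf n (apply_act a c) p"
      using Cons.IH sound_cfg_apply_act Cons.prems(1,2) by auto
    then show ?thesis by simp
  qed
qed

lemma MRB_ge_of_goal_expansion: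
  assumes "goal_expansion r n s g h e" and "h \<le> n" and "\<exists>p. valid_from lab r n s g init_cfg p"
  shows "e \<le> MRB lab r n s g"
  unfolding MRB_def
proof (rule cInf_greatest)
  show "{maxbuf n init_cfg p |p. valid_from lab r n s g init_cfg p} \<noteq> {}"
    using assms(3) by blast
  have "card (occupied_goals n init_cfg) = 0"
    by (simp add: occupied_goals_def init_cfg_def)
  then show "e \<le> b" if "b \<in> {maxbuf n init_cfg p |p. valid_from lab r n s g init_cfg p}" for b
    using that maxbuf_ge_of_goal_expansion[OF assms(1,2) sound_cfg_init] by auto
qed

lemma valid_from_unload_buffer:
  assumes "feasible r n g" and "k \<le> n"
  shows "valid_from lab r n s g
    (\<lambda>i. if i < k then AtGoal i else if i < n then InBuffer else AtStart)
    (map (\<lambda>i. BufferToGoal i i) [k..<n])"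
  using \<open>k \<le> n\<close>
proof (induction k rule: inc_induct)
  case base
  then show ?case by (auto simp: goal_reached_def)
next
  case (step k)
  let ?c = "\<lambda>k i. if i < k then AtGoal i else if i < n then InBuffer else AtStart"
  have "apply_act (BufferToGoal k k) (?c k) = ?c (Suc k)"
    by (auto simp: fun_eq_iff)
  moreover have "act_ok lab r n s g (?c k) (BufferToGoal k k)"
    using step.hyps assms(1) by (auto simp: can_place_def feasible_def)
  ultimately show ?case using step.IH step.hyps by (simp add: upt_conv_Cons)
qed

lemma valid_from_load_buffer:
  assumes "k \<le> n"
  shows "valid_from lab r n s g (\<lambda>i. if i < k then InBuffer else AtStart)
      (map StartToBuffer [k..<n] @ p)
    = valid_from lab r n s g (\<lambda>i. if i < n then InBuffer else AtStart) p"
  using assms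
proof (induction k rule: inc_induct)
  case (step k)
  let ?c = "\<lambda>k i. if i < k then InBuffer else AtStart"
  have "apply_act (StartToBuffer k) (?c k) = ?c (Suc k)"
    by (auto simp: fun_eq_iff)
  then show ?case using step.IH step.hyps by (simp add: upt_conv_Cons)
qed simp

lemma ex_valid_plan:
  assumes "feasible r n g"
  shows "\<exists>p. valid_from lab r n s g init_cfg p"
proof -
  have "valid_from lab r n s g (\<lambda>i. if i < 0 then InBuffer else AtStart)
      (map StartToBuffer [0..<n] @ map (\<lambda>i. BufferToGoal i i) [0..<n])"
    using valid_from_load_buffer[of 0 n] valid_from_unload_buffer[OF assms, of 0] by simp
  then show ?thesis unfolding init_cfg_def by auto
qed

lemma feasible_comp_bij:
  assumes "bij_betw \<sigma> {..<n} {..<n}" and "feasible r n g"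
  shows "feasible r n (g \<circ> \<sigma>)"
  unfolding feasible_def
proof (intro allI impI)
  fix i j assume "i < n" "j < n" "i \<noteq> j"
  then have "\<sigma> i < n" "\<sigma> j < n" "\<sigma> i \<noteq> \<sigma> j"
    using assms(1) unfolding bij_betw_def inj_on_def by auto
  then show "\<not> overlap r ((g \<circ> \<sigma>) i) ((g \<circ> \<sigma>) j)"
    using assms(2) unfolding feasible_def by simp
qed

lemma goal_expansion_comp_bij:
  assumes "bij_betw \<sigma> {..<n} {..<n}" and "goal_expansion r n s g h e"
  shows "goal_expansion r n s (g \<circ> \<sigma>) h e"
  unfolding goal_expansion_def
proof (intro allI impI)
  fix K assume "K \<subseteq> {..<n}" and "card K = h"
  then have "\<sigma> ` K \<subseteq> {..<n}" and "card (\<sigma> ` K) = h"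
    using assms(1) unfolding bij_betw_def by (auto simp: card_image inj_on_subset)
  moreover have "overlapping_starts r n s (g \<circ> \<sigma>) K = overlapping_starts r n s g (\<sigma> ` K)"
    unfolding overlapping_starts_def by auto
  ultimately show "h + e \<le> card (overlapping_starts r n s (g \<circ> \<sigma>) K)"
    using assms(2) unfolding goal_expansion_def by simp
qed

section \<open>Discs centred on the integer lattice\<close>

lemma overlap_iff_dist:
  assumes "r > 0"
  shows "overlap r x y \<longleftrightarrow> dist x y < 2 * r"
proof
  assume "overlap r x y"
  then obtain z where "dist x z < r" and "dist y z < r"
    unfolding overlap_def footprint_def interior_cball by auto
  then show "dist x y < 2 * r" using dist_triangle[of x y z] dist_commute[of y z] by linarith
next
  assume "dist x y < 2 * r"
  then have "midpoint x y \<in> ball x r \<inter> ball y r"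
    by (simp add: dist_midpoint)
  then show "overlap r x y" unfolding overlap_def footprint_def interior_cball by blast
qed

definition lattice_pt :: "int \<Rightarrow> int \<Rightarrow> pt" where
  "lattice_pt a b = vector [of_int a, of_int b]"

lemma overlap_lattice_pt_iff:
  "overlap (3/5) (lattice_pt a b) (lattice_pt a' b') \<longleftrightarrow> (a - a')\<^sup>2 + (b - b')\<^sup>2 \<le> 1"
proof -
  define D where "D = (a - a')\<^sup>2 + (b - b')\<^sup>2"
  have "dist (lattice_pt a b) (lattice_pt a' b') = sqrt (of_int D)"
    unfolding lattice_pt_def dist_vec_def L2_set_def sum_2 D_def by (simp add: dist_real_def)
  then have "overlap (3/5) (lattice_pt a b) (lattice_pt a' b') \<longleftrightarrow> sqrt (of_int D) < sqrt (36/25)"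
    by (simp add: overlap_iff_dist real_sqrt_divide)
  also have "\<dots> \<longleftrightarrow> D \<le> 1"
    unfolding real_sqrt_less_iff by linarith
  finally show ?thesis unfolding D_def .
qed

lemma even_sum_of_squares_le_1:
  fixes x y :: int
  assumes "even (x + y)" and "x\<^sup>2 + y\<^sup>2 \<le> 1"
  shows "x = 0 \<and> y = 0"
proof -
  have "x\<^sup>2 \<le> 1" and "y\<^sup>2 \<le> 1" using assms(2) zero_le_power2[of x] zero_le_power2[of y] by linarith+
  then have "x \<in> {-1, 0, 1}" and "y \<in> {-1, 0, 1}" unfolding abs_square_le_1 by auto
  then show ?thesis using assms by auto
qed

lemma lattice_pts_same_colour_not_overlap:
  assumes "even (a + b) = even (a' + b')" and "(a, b) \<noteq> (a', b')"
  shows "\<not> overlap (3/5) (lattice_pt a b) (lattice_pt a' b')"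
proof
  assume "overlap (3/5) (lattice_pt a b) (lattice_pt a' b')"
  moreover have "even ((a - a') + (b - b'))" using assms(1) by presburger
  ultimately have "a - a' = 0 \<and> b - b' = 0"
    using even_sum_of_squares_le_1 unfolding overlap_lattice_pt_iff by blast
  then show False using assms(2) by simp
qed

section \<open>Vertex expansion of a grid of blocks\<close>

definition block_index :: "nat \<Rightarrow> nat \<Rightarrow> nat \<Rightarrow> nat \<Rightarrow> nat" where
  "block_index m p q t = 2 * (p + m * q) + t"

lemma block_index_decode [simp]:
  assumes "p < m" and "t < 2"
  shows "block_index m p q t div 2 mod m = p" and "block_index m p q t div 2 div m = q"
    and "block_index m p q t mod 2 = t"
proof -
  have "block_index m p q t div 2 = p + m * q" using \<open>t < 2\<close> by (simp add: block_index_def)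
  then show "block_index m p q t div 2 mod m = p" and "block_index m p q t div 2 div m = q"
    using \<open>p < m\<close> by simp_all
  show "block_index m p q t mod 2 = t" using \<open>t < 2\<close> unfolding block_index_def by presburger
qed

fun grid_adjacent :: "nat \<times> nat \<Rightarrow> nat \<times> nat \<Rightarrow> bool" where
  "grid_adjacent (p, q) (p', q') \<longleftrightarrow>
     (q = q' \<and> (p' = Suc p \<or> p = Suc p')) \<or> (p = p' \<and> (q' = Suc q \<or> q = Suc q'))"

lemma ex_consecutive_change:
  fixes a b m :: nat
  assumes "P a" and "\<not> P b" and "a < m" and "b < m"
  shows "\<exists>x. Suc x < m \<and> P x \<noteq> P (Suc x)"
proof (rule ccontr)
  assume "\<not> ?thesis"
  then have "x < m \<Longrightarrow> P x = P 0" for x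
    by (induction x) auto
  then show False using assms by blast
qed

lemma one_le_sum_of_bool_lessThan:
  fixes n :: nat
  assumes "i < n" and "P i"
  shows "1 \<le> (\<Sum>i<n. of_bool (P i) :: nat)"
  using member_le_sum[of i "{..<n}" "\<lambda>i. of_bool (P i) :: nat"] assms by simp

(* Goals and starts are both indexed by {..<2 m^2}, in m x m blocks of two; R k j means
   that goal k overlaps start j. *)
locale block_grid =
  fixes m :: nat and R :: "nat \<Rightarrow> nat \<Rightarrow> bool"
  assumes within_block:
      "p < m \<Longrightarrow> t < 2 \<Longrightarrow> t' < 2 \<Longrightarrow> R (block_index m p q t) (block_index m p q t')"
    and between_blocks:
      "p < m \<Longrightarrow> q < m \<Longrightarrow> p' < m \<Longrightarrow> q' < m \<Longrightarrow> grid_adjacent (p, q) (p', q')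
        \<Longrightarrow> \<exists>t<2. \<exists>t'<2. R (block_index m p' q' t) (block_index m p q t')"
begin

definition block :: "nat \<Rightarrow> nat \<Rightarrow> nat set" where
  "block p q = {block_index m p q 0, block_index m p q 1}"

definition neighbours :: "nat set \<Rightarrow> nat set" where
  "neighbours K = {j. j < 2 * m * m \<and> (\<exists>k\<in>K. R k j)}"

definition full_block :: "nat set \<Rightarrow> nat \<Rightarrow> nat \<Rightarrow> bool" where
  "full_block K p q \<longleftrightarrow> block p q \<subseteq> K"

definition full_row :: "nat set \<Rightarrow> nat \<Rightarrow> bool" where
  "full_row K q \<longleftrightarrow> (\<forall>p<m. full_block K p q)"

definition empty_row :: "nat set \<Rightarrow> nat \<Rightarrow> bool" where
  "empty_row K q \<longleftrightarrow> (\<forall>p<m. K \<inter> block p q = {})"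

definition boundary_block :: "nat set \<Rightarrow> nat \<Rightarrow> nat \<Rightarrow> bool" where
  "boundary_block K p q \<longleftrightarrow> \<not> full_block K p q \<and>
     (K \<inter> block p q \<noteq> {} \<or> (\<exists>p'<m. \<exists>q'<m. grid_adjacent (p, q) (p', q') \<and> full_block K p' q'))"

lemma card_block: "card (block p q) = 2"
  unfolding block_def block_index_def by simp

lemma block_subset_grid: "p < m \<Longrightarrow> q < m \<Longrightarrow> block p q \<subseteq> {..<2 * m * m}"
proof -
  assume "p < m" "q < m"
  then have "Suc (p + m * q) \<le> m * Suc q" by simp
  also have "\<dots> \<le> m * m" using \<open>q < m\<close> by (simp only: Suc_le_eq mult_le_mono2)
  finally show ?thesis unfolding block_def block_index_def by auto
qed

lemma card_eq_sum_blocks: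
  assumes "A \<subseteq> {..<2 * m * m}"
  shows "card A = (\<Sum>q<m. \<Sum>p<m. card (A \<inter> block p q))"
proof -
  have block_eq: "block p q = {(p + q * m) * 2..<(p + q * m) * 2 + 2}" for p q
    unfolding block_def block_index_def by (auto simp: algebra_simps)
  have shift: "(\<Sum>b\<in>{q * m..<q * m + m}. f b) = (\<Sum>p<m. f (p + q * m))" for q and f :: "nat \<Rightarrow> nat"
    using sum.atLeastLessThan_shift_bounds[of f 0 "q * m" m]
    by (simp add: atLeast0LessThan add.commute)
  have "{..<m * m * 2} \<inter> A = A"
    using assms by (auto simp: ac_simps)
  then have "card A = (\<Sum>i<m * m * 2. of_bool (i \<in> A))"
    by simp
  also have "\<dots> = (\<Sum>b<m * m. \<Sum>i\<in>{b * 2..<b * 2 + 2}. of_bool (i \<in> A))"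
    by (rule sum.nat_group[symmetric])
  also have "\<dots> = (\<Sum>q<m. \<Sum>b\<in>{q * m..<q * m + m}. \<Sum>i\<in>{b * 2..<b * 2 + 2}. of_bool (i \<in> A))"
    by (rule sum.nat_group[symmetric])
  also have "\<dots> = (\<Sum>q<m. \<Sum>p<m. \<Sum>i\<in>block p q. of_bool (i \<in> A))"
    by (simp only: shift block_eq)
  also have "\<dots> = (\<Sum>q<m. \<Sum>p<m. card (A \<inter> block p q))"
    by (simp add: block_def Int_commute)
  finally show ?thesis .
qed

lemma card_Int_block_le: "card (K \<inter> block p q) \<le> 2"
  using card_mono[of "block p q" "K \<inter> block p q"] card_block by (simp add: block_def)

lemma card_Int_block_eq_2_iff: "card (K \<inter> block p q) = 2 \<longleftrightarrow> full_block K p q"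
proof
  assume "card (K \<inter> block p q) = 2"
  then have "K \<inter> block p q = block p q"
    using card_subset_eq[of "block p q" "K \<inter> block p q"] card_block by (auto simp: block_def)
  then show "full_block K p q" unfolding full_block_def by blast
qed (simp add: full_block_def card_block Int_absorb1)

lemma block_subset_neighbours:
  assumes "p < m" and "q < m" and "K \<inter> block p q \<noteq> {}"
  shows "block p q \<subseteq> neighbours K"
proof
  fix j assume "j \<in> block p q"
  moreover obtain k where "k \<in> K" and "k \<in> block p q" using assms(3) by blast
  ultimately have "R k j" using within_block[OF assms(1)] unfolding block_def by auto
  then show "j \<in> neighbours K"
    using \<open>j \<in> block p q\<close> \<open>k \<in> K\<close> block_subset_grid[OF assms(1,2)] unfolding neighbours_def by auto
qed

lemma neighbours_meet_block:
  assumes "p < m" and "q < m" and "p' < m" and "q' < m" and "grid_adjacent (p, q) (p', q')"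
    and "full_block K p' q'"
  shows "neighbours K \<inter> block p q \<noteq> {}"
proof -
  obtain t t' where "t < 2" "t' < 2" and R: "R (block_index m p' q' t) (block_index m p q t')"
    using between_blocks[OF assms(1-5)] by blast
  then have "block_index m p' q' t \<in> K" and "block_index m p q t' \<in> block p q"
    using assms(6) unfolding full_block_def block_def by (auto simp: less_2_cases_iff)
  then show ?thesis
    using R block_subset_grid[OF assms(1,2)] unfolding neighbours_def by blast
qed

lemma card_block_neighbours:
  assumes "p < m" and "q < m"
  shows "card (K \<inter> block p q) + of_bool (boundary_block K p q) \<le> card (neighbours K \<inter> block p q)"
proof (cases "K \<inter> block p q = {}")
  case True
  have "of_bool (boundary_block K p q) \<le> card (neighbours K \<inter> block p q)"
    using True neighbours_meet_block[OF assms] unfolding boundary_block_def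
    by (auto simp: card_gt_0_iff block_def Suc_le_eq)
  then show ?thesis using True by simp
next
  case False
  then have "card (neighbours K \<inter> block p q) = 2"
    using block_subset_neighbours[OF assms] card_block by (simp add: Int_absorb1)
  moreover have "card (K \<inter> block p q) \<noteq> 2" if "boundary_block K p q"
    using that card_Int_block_eq_2_iff unfolding boundary_block_def by blast
  ultimately show ?thesis using card_Int_block_le[of K p q] by (cases "boundary_block K p q") auto
qed

lemma card_add_boundary_blocks_le:
  assumes "K \<subseteq> {..<2 * m * m}"
  shows "card K + (\<Sum>q<m. \<Sum>p<m. of_bool (boundary_block K p q)) \<le> card (neighbours K)"
proof -
  have "card K + (\<Sum>q<m. \<Sum>p<m. of_bool (boundary_block K p q))
      = (\<Sum>q<m. \<Sum>p<m. card (K \<inter> block p q) + of_bool (boundary_block K p q))"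
    using card_eq_sum_blocks[OF assms] by (simp add: sum.distrib)
  also have "\<dots> \<le> (\<Sum>q<m. \<Sum>p<m. card (neighbours K \<inter> block p q))"
    by (intro sum_mono card_block_neighbours) auto
  also have "\<dots> = card (neighbours K)"
    by (rule card_eq_sum_blocks[symmetric]) (auto simp: neighbours_def)
  finally show ?thesis .
qed

lemma boundary_block_of_adjacent_full:
  assumes "grid_adjacent (p, q) (p', q')" and "p' < m" and "q' < m"
    and "full_block K p' q'" and "\<not> full_block K p q"
  shows "boundary_block K p q"
  using assms unfolding boundary_block_def by blast

lemma ex_boundary_block_in_row:
  assumes "q < m" and "pa < m" and "full_block K pa q" and "pb < m" and "\<not> full_block K pb q"
  shows "\<exists>p<m. boundary_block K p q"
proof -
  obtain x where "Suc x < m" and "full_block K x q \<noteq> full_block K (Suc x) q"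
    using ex_consecutive_change[of "\<lambda>p. full_block K p q", OF assms(3,5,2,4)] by blast
  then have "boundary_block K x q \<or> boundary_block K (Suc x) q"
    using boundary_block_of_adjacent_full[of x q "Suc x" q K]
      boundary_block_of_adjacent_full[of "Suc x" q x q K]
      \<open>q < m\<close> by (cases "full_block K x q") auto
  then show ?thesis using \<open>Suc x < m\<close> Suc_lessD by blast
qed

lemma ex_boundary_block_in_column:
  assumes "p < m" and "qa < m" and "full_block K p qa" and "qb < m" and "\<not> full_block K p qb"
  shows "\<exists>q<m. boundary_block K p q"
proof -
  obtain x where "Suc x < m" and "full_block K p x \<noteq> full_block K p (Suc x)"
    using ex_consecutive_change[of "\<lambda>q. full_block K p q", OF assms(3,5,2,4)] by blast
  then have "boundary_block K p x \<or> boundary_block K p (Suc x)"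
    using boundary_block_of_adjacent_full[of p x p "Suc x" K]
      boundary_block_of_adjacent_full[of p "Suc x" p x K]
      \<open>p < m\<close> by (cases "full_block K p x") auto
  then show ?thesis using \<open>Suc x < m\<close> Suc_lessD by blast
qed

lemma ex_boundary_block_in_mixed_row:
  assumes "q < m" and "\<not> full_row K q" and "\<not> empty_row K q"
  shows "\<exists>p<m. boundary_block K p q"
proof -
  obtain pa where "pa < m" and "K \<inter> block pa q \<noteq> {}" using assms(3) unfolding empty_row_def by blast
  obtain pb where "pb < m" and "\<not> full_block K pb q" using assms(2) unfolding full_row_def by blast
  show ?thesis
  proof (cases "full_block K pa q")
    case True
    then show ?thesis
      using ex_boundary_block_in_row \<open>pa < m\<close> \<open>pb < m\<close> \<open>\<not> full_block K pb q\<close> assms(1)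
      by blast
  next
    case False
    then show ?thesis using \<open>pa < m\<close> \<open>K \<inter> block pa q \<noteq> {}\<close> unfolding boundary_block_def by blast
  qed
qed

lemma sum_card_Int_row_le: "(\<Sum>p<m. card (K \<inter> block p q)) \<le> 2 * m"
  using sum_mono[of "{..<m}" "\<lambda>p. card (K \<inter> block p q)" "\<lambda>_. 2"] card_Int_block_le by simp

lemma mixed_rows_ge:
  assumes "K \<subseteq> {..<2 * m * m}" and "card K = m * m"
    and no_full_or_no_empty: "(\<forall>q<m. \<not> full_row K q) \<or> (\<forall>q<m. \<not> empty_row K q)"
  shows "m div 2 \<le> (\<Sum>q<m. of_bool (\<not> full_row K q \<and> \<not> empty_row K q))"
    (is "_ \<le> (\<Sum>q<m. of_bool (?mixed q))")
proof -
  define row where "row q = (\<Sum>p<m. card (K \<inter> block p q))" for q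
  have row_sum: "(\<Sum>q<m. row q) = m * m"
    using card_eq_sum_blocks[OF assms(1)] assms(2) by (simp add: row_def)
  have full_row: "full_row K q \<Longrightarrow> row q = 2 * m" for q
    unfolding row_def full_row_def
    by (subst sum.cong[OF refl, of _ _ "\<lambda>_. 2"]) (auto simp: card_Int_block_eq_2_iff)
  have empty_row: "empty_row K q \<Longrightarrow> row q = 0" for q
    unfolding row_def empty_row_def by simp
  show ?thesis
  proof (cases "\<forall>q<m. \<not> full_row K q")
    case True
    have "m * m = (\<Sum>q<m. row q)" using row_sum by simp
    also have "\<dots> \<le> (\<Sum>q<m. m * (2 * of_bool (?mixed q)))"
      using True empty_row sum_card_Int_row_le[of K]
      by (intro sum_mono) (auto simp: row_def mult.commute)
    also have "\<dots> = m * (2 * (\<Sum>q<m. of_bool (?mixed q)))"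
      by (simp only: sum_distrib_left mult.assoc)
    finally show ?thesis by (cases "m = 0") auto
  next
    case False
    then have no_empty: "\<forall>q<m. \<not> empty_row K q" using no_full_or_no_empty by blast
    have "m * (2 * (\<Sum>q<m. of_bool (full_row K q))) = (\<Sum>q<m. m * (2 * of_bool (full_row K q)))"
      by (simp only: sum_distrib_left mult.assoc)
    also have "\<dots> \<le> (\<Sum>q<m. row q)"
      using full_row by (intro sum_mono) simp
    finally have few_full: "m * (2 * (\<Sum>q<m. of_bool (full_row K q))) \<le> m * m"
      using row_sum by simp
    have "(\<Sum>q<m. of_bool (full_row K q)) + (\<Sum>q<m. of_bool (?mixed q))
        = (\<Sum>q<m. of_bool (full_row K q) + of_bool (?mixed q) :: nat)"
      by (rule sum.distrib[symmetric])
    also have "\<dots> = m"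
      using no_empty by (simp add: sum.cong[OF refl, of _ _ "\<lambda>_. 1"])
    finally show ?thesis using few_full by (cases "m = 0") auto
  qed
qed

lemma empty_block_not_full: "K \<inter> block p q = {} \<Longrightarrow> \<not> full_block K p q"
  unfolding full_block_def block_def by auto

lemma boundary_blocks_ge:
  assumes "K \<subseteq> {..<2 * m * m}" and "card K = m * m"
  shows "m div 2 \<le> (\<Sum>q<m. \<Sum>p<m. of_bool (boundary_block K p q))"
proof (cases "(\<exists>qa<m. full_row K qa) \<and> (\<exists>qb<m. empty_row K qb)")
  case True
  then obtain qa qb where "qa < m" "full_row K qa" "qb < m" "empty_row K qb" by blast
  have "1 \<le> (\<Sum>q<m. of_bool (boundary_block K p q) :: nat)" if "p < m" for p
  proof -
    have "full_block K p qa" and "\<not> full_block K p qb"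
      using \<open>full_row K qa\<close> \<open>empty_row K qb\<close> empty_block_not_full \<open>p < m\<close>
      unfolding full_row_def empty_row_def by blast+
    then obtain q where "q < m" and "boundary_block K p q"
      using ex_boundary_block_in_column \<open>p < m\<close> \<open>qa < m\<close> \<open>qb < m\<close> by blast
    then show ?thesis by (rule one_le_sum_of_bool_lessThan)
  qed
  then have "(\<Sum>p<m. 1) \<le> (\<Sum>p<m. \<Sum>q<m. of_bool (boundary_block K p q) :: nat)"
    by (intro sum_mono) simp
  also have "\<dots> = (\<Sum>q<m. \<Sum>p<m. of_bool (boundary_block K p q))"
    by (rule sum.swap)
  finally show ?thesis by simp
next
  case False
  then have "m div 2 \<le> (\<Sum>q<m. of_bool (\<not> full_row K q \<and> \<not> empty_row K q))"
    using mixed_rows_ge[OF assms] by blast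
  also have "\<dots> \<le> (\<Sum>q<m. \<Sum>p<m. of_bool (boundary_block K p q))"
  proof (rule sum_mono)
    fix q assume "q \<in> {..<m}"
    show "of_bool (\<not> full_row K q \<and> \<not> empty_row K q)
      \<le> (\<Sum>p<m. of_bool (boundary_block K p q) :: nat)"
    proof (cases "\<not> full_row K q \<and> \<not> empty_row K q")
      case True
      then obtain p where "p < m" and "boundary_block K p q"
        using ex_boundary_block_in_mixed_row \<open>q \<in> {..<m}\<close> by blast
      then show ?thesis using True one_le_sum_of_bool_lessThan[of p m] by simp
    qed auto
  qed
  finally show ?thesis .
qed

lemma card_neighbours_ge:
  assumes "K \<subseteq> {..<2 * m * m}" and "card K = m * m"
  shows "m * m + m div 2 \<le> card (neighbours K)"
  using card_add_boundary_blocks_le[OF assms(1)] boundary_blocks_ge[OF assms] assms(2) by linarith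

end

section \<open>The checkerboard instance\<close>

(* Object block_index m p q t starts at cell (2p + t, 2q + t) and has its goal at
   (2p + 1 - t, 2q + t): the starts lie on the even and the goals on the odd colour
   class of the checkerboard. *)
definition grid_start :: "nat \<Rightarrow> nat \<Rightarrow> pt" where
  "grid_start m i =
     lattice_pt (2 * int (i div 2 mod m) + int (i mod 2))
       (2 * int (i div 2 div m) + int (i mod 2))"

definition grid_goal :: "nat \<Rightarrow> nat \<Rightarrow> pt" where
  "grid_goal m i =
     lattice_pt (2 * int (i div 2 mod m) + 1 - int (i mod 2))
       (2 * int (i div 2 div m) + int (i mod 2))"

lemma lattice_coordinate_eq_iff:
  fixes p p' t t' :: nat
  assumes "t < 2" and "t' < 2"
  shows "2 * int p + int t = 2 * int p' + int t' \<longleftrightarrow> p = p' \<and> t = t'"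
    and "2 * int p - int t = 2 * int p' - int t' \<longleftrightarrow> p = p' \<and> t = t'"
  using assms by presburger+

lemma eq_of_decode_eq:
  fixes i j :: nat
  assumes "i div 2 mod m = j div 2 mod m" and "i div 2 div m = j div 2 div m"
    and "i mod 2 = j mod 2"
  shows "i = j"
  using assms by (metis div_mult_mod_eq)

lemma feasible_grid_start: "feasible (3/5) n (grid_start m)"
  unfolding feasible_def grid_start_def
proof (intro allI impI lattice_pts_same_colour_not_overlap)
  fix i j :: nat assume "i \<noteq> j"
  then show "(2 * int (i div 2 mod m) + int (i mod 2), 2 * int (i div 2 div m) + int (i mod 2))
      \<noteq> (2 * int (j div 2 mod m) + int (j mod 2), 2 * int (j div 2 div m) + int (j mod 2))"
    using eq_of_decode_eq[of i m j] by (auto simp: lattice_coordinate_eq_iff)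
qed simp

lemma feasible_grid_goal: "feasible (3/5) n (grid_goal m)"
  unfolding feasible_def grid_goal_def
proof (intro allI impI lattice_pts_same_colour_not_overlap)
  fix i j :: nat assume "i \<noteq> j"
  then show "(2 * int (i div 2 mod m) + 1 - int (i mod 2), 2 * int (i div 2 div m) + int (i mod 2))
      \<noteq> (2 * int (j div 2 mod m) + 1 - int (j mod 2), 2 * int (j div 2 div m) + int (j mod 2))"
    using eq_of_decode_eq[of i m j] by (auto simp: lattice_coordinate_eq_iff)
qed simp

lemma grid_start_block_index [simp]:
  "p < m \<Longrightarrow> t < 2 \<Longrightarrow>
    grid_start m (block_index m p q t) = lattice_pt (2 * int p + int t) (2 * int q + int t)"
  by (simp add: grid_start_def)

lemma grid_goal_block_index [simp]:
  "p < m \<Longrightarrow> t < 2 \<Longrightarrow>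
    grid_goal m (block_index m p q t) = lattice_pt (2 * int p + 1 - int t) (2 * int q + int t)"
  by (simp add: grid_goal_def)

lemma block_grid_grid: "block_grid m (\<lambda>k j. overlap (3/5) (grid_goal m k) (grid_start m j))"
proof
  fix p q t t' :: nat assume "p < m" "t < 2" "t' < 2"
  then show
    "overlap (3/5) (grid_goal m (block_index m p q t)) (grid_start m (block_index m p q t'))"
    by (auto simp: overlap_lattice_pt_iff less_2_cases_iff)
next
  fix p q p' q' :: nat assume "p < m" "q < m" "p' < m" "q' < m" "grid_adjacent (p, q) (p', q')"
  then show "\<exists>t<2. \<exists>t'<2.
      overlap (3/5) (grid_goal m (block_index m p' q' t)) (grid_start m (block_index m p q t'))"
    by (auto simp: overlap_lattice_pt_iff numeral_2_eq_2 Ex_less_Suc)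
qed

lemma goal_expansion_grid:
  "goal_expansion (3/5) (2 * m * m) (grid_start m) (grid_goal m) (m * m) (m div 2)"
proof -
  interpret block_grid m "\<lambda>k j. overlap (3/5) (grid_goal m k) (grid_start m j)"
    by (rule block_grid_grid)
  have "neighbours K = overlapping_starts (3/5) (2 * m * m) (grid_start m) (grid_goal m) K" for K
    unfolding neighbours_def overlapping_starts_def ..
  then show ?thesis
    unfolding goal_expansion_def using card_neighbours_ge by simp
qed

lemma ex_bounded_workspace:
  fixes s g :: "nat \<Rightarrow> pt"
  shows "\<exists>W. bounded W \<and> (\<forall>i<n. footprint r (s i) \<subseteq> W \<and> footprint r (g i) \<subseteq> W)"
proof (intro exI conjI)
  show "bounded (\<Union>i<n. footprint r (s i) \<union> footprint r (g i))"
    by (intro bounded_UN) (auto simp: footprint_def)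
qed blast

lemma sqrt_twice_square_le:
  assumes "2 \<le> m"
  shows "1/8 * sqrt (real (2 * m * m)) \<le> real (m div 2)"
proof -
  have "sqrt (real (2 * m * m)) \<le> sqrt ((3/2 * real m)\<^sup>2)"
    by (simp add: power2_eq_square)
  also have "\<dots> = 3/2 * real m" by simp
  finally show ?thesis using assms by linarith
qed

lemma MRB_grid_ge:
  assumes "2 \<le> m" and "bij_betw \<sigma> {..<2 * m * m} {..<2 * m * m}"
  shows "1/8 * sqrt (real (2 * m * m))
    \<le> real (MRB lab (3/5) (2 * m * m) (grid_start m) (grid_goal m \<circ> \<sigma>))"
proof -
  have "m div 2 \<le> MRB lab (3/5) (2 * m * m) (grid_start m) (grid_goal m \<circ> \<sigma>)"
  proof (rule MRB_ge_of_goal_expansion)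
    show "goal_expansion (3/5) (2 * m * m) (grid_start m) (grid_goal m \<circ> \<sigma>) (m * m) (m div 2)"
      using goal_expansion_comp_bij[OF assms(2) goal_expansion_grid] .
    show "\<exists>p. valid_from lab (3/5) (2 * m * m) (grid_start m) (grid_goal m \<circ> \<sigma>) init_cfg p"
      using ex_valid_plan feasible_comp_bij[OF assms(2) feasible_grid_goal] by blast
  qed simp
  then show ?thesis using sqrt_twice_square_le[OF assms(1)] by linarith
qed

lemma infinite_Collect_twice_squares:
  fixes P :: "nat \<Rightarrow> bool"
  assumes "\<And>m. 2 \<le> m \<Longrightarrow> P (2 * m * m)"
  shows "infinite {n. P n}"
  unfolding infinite_nat_iff_unbounded_le
proof
  fix N :: nat
  have "N \<le> 2 * (N + 2) * (N + 2)" by simp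
  moreover have "P (2 * (N + 2) * (N + 2))" by (rule assms) simp
  ultimately show "\<exists>n\<ge>N. n \<in> {n. P n}" by blast
qed

theorem theorem3:
  shows "\<exists>c::real. c > 0 \<and>
    infinite {n::nat. \<exists>r::real. r > 0 \<and> (\<exists>s g :: nat \<Rightarrow> pt.
       (\<exists>W. bounded W \<and> (\<forall>i<n. footprint r (s i) \<subseteq> W \<and> footprint r (g i) \<subseteq> W)) \<and>
       feasible r n s \<and> feasible r n g \<and>
       real (MRB False r n s g) \<ge> c * sqrt (real n) \<and>
       (\<forall>\<sigma>. bij_betw \<sigma> {..<n} {..<n} \<longrightarrow>
          real (MRB True r n s (g \<circ> \<sigma>)) \<ge> c * sqrt (real n)))}"
  apply (intro exI[of _ "1/8"] conjI)
   apply simp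
  apply (rule infinite_Collect_twice_squares)
  subgoal for m
    using MRB_grid_ge[of m id False] MRB_grid_ge[of m _ True]
    by (intro exI[of _ "3/5"] exI[of _ "grid_start m"] exI[of _ "grid_goal m"] conjI allI impI)
      (simp_all add: ex_bounded_workspace feasible_grid_start feasible_grid_goal)
  done

end
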